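(* Let $F$ be a CD-function. Then there is a unique strictly positive solution $\varphi:(0,\infty)\to(0,\infty)$ of the ODE $\dot\varphi(t)+F(\varphi(t))=0$ for $t>0$ with $\lim_{t\to0+}\varphi(t)=\infty$. This function is strictly decreasing and log-convex on $(0,\infty)$, and $\lim_{t\to\infty}\varphi(t)=0$.
   Context: A CD-function is a continuous function $F:[0,\infty)\to[0,\infty)$ with $F(0)=0$, such that $x\mapsto F(x)/x$ is strictly increasing on $(0,\infty)$, and $\int_1^\infty dr/F(r)<\infty$. *)

theory Defs
  imports "HOL-Analysis.Analysis"
begin

definition CD_function :: "(real \<Rightarrow> real) \<Rightarrow> bool" where
  "CD_function F \<longleftrightarrow>
     continuous_on {0..} F \<and> (\<forall>x\<ge>0. F x \<ge> 0) \<and> F 0 = 0 \<and>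
     strict_mono_on {0<..} (\<lambda>x. F x / x) \<and>
     (\<lambda>r. 1 / F r) integrable_on {1..}"

definition CD_solution :: "(real \<Rightarrow> real) \<Rightarrow> (real \<Rightarrow> real) \<Rightarrow> bool" where
  "CD_solution F \<phi> \<longleftrightarrow>
     (\<forall>t>0. \<phi> t > 0) \<and>
     (\<forall>t>0. (\<phi> has_real_derivative (- F (\<phi> t))) (at t)) \<and>
     filterlim \<phi> at_top (at_right 0)"

end

theory Submission
  imports Defs
begin

text \<open>The tail integral \<open>G x = \<integral>\<^sub>x\<^sup>\<infinity> dr / F r\<close> is a strictly decreasing bijection of
  \<open>(0,\<infinity>)\<close> onto itself with \<open>G' = -1/F\<close>; it tends to \<open>\<infinity>\<close> at \<open>0\<^sup>+\<close> because \<open>F x \<le> F 1 \<cdot> x\<close>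
  for \<open>x \<le> 1\<close>. Along any positive solution \<open>\<psi>\<close> of the ODE, \<open>(G \<circ> \<psi>)' = 1\<close>, and the blow-up at
  \<open>0\<^sup>+\<close> forces \<open>G (\<psi> t) = t\<close>; so the solutions are exactly the inverse of \<open>G\<close>. Log-convexity
  holds because \<open>(ln \<psi>)' = - F(\<psi>)/\<psi>\<close> is increasing, \<open>\<psi>\<close> being decreasing and \<open>F(x)/x\<close>
  increasing.\<close>

lemma CD_function_pos:
  assumes F: "CD_function F" and x: "x > 0"
  shows "F x > 0"
proof -
  have "F (x/2) / (x/2) < F x / x"
    using F x by (intro strict_mono_onD[of "{0<..}" "\<lambda>x. F x / x"]) (auto simp: CD_function_def)
  moreover have "F (x/2) / (x/2) \<ge> 0"
    using F x by (simp add: CD_function_def)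
  ultimately have "F x / x > 0"
    by linarith
  with x show ?thesis
    by (simp add: zero_less_divide_iff)
qed

lemma CD_function_ratio_mono:
  assumes F: "CD_function F" and "0 < x" "x \<le> y"
  shows "F x / x \<le> F y / y"
proof (cases "x = y")
  case False
  with assms show ?thesis
    by (intro less_imp_le strict_mono_onD[of "{0<..}" "\<lambda>x. F x / x"]) (auto simp: CD_function_def)
qed simp

lemma CD_function_continuous_on_inverse:
  assumes F: "CD_function F"
  shows "continuous_on {0<..} (\<lambda>r. 1 / F r)"
proof (intro continuous_on_divide continuous_on_const ballI)
  show "continuous_on {0<..} F"
    using F by (auto simp: CD_function_def intro: continuous_on_subset)
  show "F x \<noteq> 0" if "x \<in> {0<..}" for x
    using CD_function_pos[OF F, of x] that by simp
qed

lemma CD_function_absolutely_integrable_inverse: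
  assumes F: "CD_function F" and x: "x > 0"
  shows "(\<lambda>r. 1 / F r) absolutely_integrable_on {x..}"
proof -
  have nonneg: "0 \<le> 1 / F r" if "r > 0" for r
    using CD_function_pos[OF F that] by simp
  have "(\<lambda>r. 1 / F r) absolutely_integrable_on {1..}"
  proof (rule nonnegative_absolutely_integrable_1)
    show "(\<lambda>r. 1 / F r) integrable_on {1..}"
      using F by (simp add: CD_function_def)
  qed (use nonneg in simp)
  then have tail: "(\<lambda>r. 1 / F r) absolutely_integrable_on {max x 1..}"
    by (rule set_integrable_subset) auto
  have head: "(\<lambda>r. 1 / F r) absolutely_integrable_on {x..max x 1}"
  proof (rule nonnegative_absolutely_integrable_1)
    show "(\<lambda>r. 1 / F r) integrable_on {x..max x 1}"
      using x by (intro integrable_continuous_interval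
          continuous_on_subset[OF CD_function_continuous_on_inverse[OF F]]) auto
  qed (use nonneg x in simp)
  have "{x..max x 1} \<union> {max x 1..} = {x..}"
    by auto
  then show ?thesis
    using set_integrable_Un[OF head tail] by simp
qed

lemma CD_function_integrable_inverse:
  assumes "CD_function F" and "x > 0"
  shows "(\<lambda>r. 1 / F r) integrable_on {x..}"
  using CD_function_absolutely_integrable_inverse[OF assms] set_lebesgue_integral_eq_integral(1)
  by blast

definition CD_tail :: "(real \<Rightarrow> real) \<Rightarrow> real \<Rightarrow> real" where
  "CD_tail F x = integral {x..} (\<lambda>r. 1 / F r)"

lemma CD_tail_split:
  assumes F: "CD_function F" and "0 < a" "a \<le> b"
  shows "CD_tail F a = integral {a..b} (\<lambda>r. 1 / F r) + CD_tail F b"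
proof -
  have "integral ({a..b} \<union> {b..}) (\<lambda>r. 1 / F r) =
        integral {a..b} (\<lambda>r. 1 / F r) + integral {b..} (\<lambda>r. 1 / F r)"
  proof (rule integral_Un)
    show "(\<lambda>r. 1 / F r) integrable_on {a..b}"
      using assms by (intro integrable_continuous_interval
          continuous_on_subset[OF CD_function_continuous_on_inverse[OF F]]) auto
    show "(\<lambda>r. 1 / F r) integrable_on {b..}"
      using assms by (intro CD_function_integrable_inverse[OF F]) auto
    have "{a..b} \<inter> {b..} = {b}"
      using assms by auto
    then show "negligible ({a..b} \<inter> {b..})"
      by simp
  qed
  moreover have "{a..b} \<union> {b..} = {a..}"
    using assms by auto
  ultimately show ?thesis
    by (simp add: CD_tail_def)
qed

lemma CD_tail_nonneg:
  assumes F: "CD_function F" and x: "x > 0"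
  shows "CD_tail F x \<ge> 0"
  unfolding CD_tail_def
proof (rule integral_nonneg[OF CD_function_integrable_inverse[OF assms]])
  show "0 \<le> 1 / F r" if "r \<in> {x..}" for r
    using CD_function_pos[OF F, of r] x that by simp
qed

lemma CD_tail_has_derivative:
  assumes F: "CD_function F" and x: "x > 0"
  shows "(CD_tail F has_real_derivative - (1 / F x)) (at x)"
proof -
  have ab: "0 < x/2" "x/2 < x" "x < 2*x"
    using x by auto
  have "((\<lambda>y. integral {x/2..y} (\<lambda>r. 1 / F r)) has_real_derivative 1 / F x) (at x within {x/2..2*x})"
    using ab by (intro integral_has_real_derivative
        continuous_on_subset[OF CD_function_continuous_on_inverse[OF F]]) auto
  then have "((\<lambda>y. integral {x/2..y} (\<lambda>r. 1 / F r)) has_real_derivative 1 / F x) (at x)"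
    using at_within_interior[of x "{x/2..2*x}"] ab by simp
  then have "((\<lambda>y. CD_tail F (x/2) - integral {x/2..y} (\<lambda>r. 1 / F r))
               has_real_derivative - (1 / F x)) (at x)"
    by (auto intro!: derivative_eq_intros)
  then show ?thesis
  proof (rule has_field_derivative_transform_within_open)
    show "CD_tail F (x/2) - integral {x/2..y} (\<lambda>r. 1 / F r) = CD_tail F y"
      if "y \<in> {x/2<..<2*x}" for y
      using CD_tail_split[OF F, of "x/2" y] ab that by simp
  qed (use ab in auto)
qed

lemma CD_tail_continuous_on:
  assumes "CD_function F"
  shows "continuous_on {0<..} (CD_tail F)"
  using CD_tail_has_derivative[OF assms] DERIV_isCont
  by (intro continuous_at_imp_continuous_on) auto

lemma CD_tail_strict_antimono:
  assumes F: "CD_function F"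
  shows "strict_antimono_on {0<..} (CD_tail F)"
proof (rule monotone_onI)
  fix x y :: real
  assume x: "x \<in> {0<..}" and "x < y"
  show "CD_tail F y < CD_tail F x"
  proof (rule DERIV_neg_imp_decreasing[OF \<open>x < y\<close>])
    fix z assume "x \<le> z"
    with x have "z > 0"
      by simp
    then show "\<exists>d. (CD_tail F has_real_derivative d) (at z) \<and> d < 0"
      using CD_tail_has_derivative[OF F] CD_function_pos[OF F] by (intro exI[of _ "- (1 / F z)"]) simp
  qed
qed

lemma CD_tail_pos:
  assumes F: "CD_function F" and x: "x > 0"
  shows "CD_tail F x > 0"
  using monotone_onD[OF CD_tail_strict_antimono[OF F], of x "x+1"] CD_tail_nonneg[OF F, of "x+1"] x
  by simp

lemma CD_tail_ge_ln:
  assumes F: "CD_function F" and x: "0 < x" "x \<le> 1"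
  shows "- ln x / F 1 \<le> CD_tail F x"
proof -
  have F1: "F 1 > 0"
    using CD_function_pos[OF F] by simp
  have ln_integral: "((\<lambda>r. inverse r / F 1) has_integral (- ln x / F 1)) {x..1}"
  proof -
    have "((\<lambda>r. inverse r / F 1) has_integral (ln 1 / F 1 - ln x / F 1)) {x..1}"
    proof (rule fundamental_theorem_of_calculus)
      show "((\<lambda>r. ln r / F 1) has_vector_derivative inverse r / F 1) (at r within {x..1})"
        if "r \<in> {x..1}" for r
      proof -
        have "((\<lambda>r. ln r / F 1) has_real_derivative inverse r / F 1) (at r)"
          using that x by (intro DERIV_cdivide DERIV_ln) auto
        then show ?thesis
          by (simp add: has_real_derivative_iff_has_vector_derivative has_vector_derivative_at_within)
      qed
    qed (use x in auto)
    then show ?thesis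
      by simp
  qed
  have "inverse r / F 1 \<le> 1 / F r" if r: "r \<in> {x..1}" for r
  proof -
    have r0: "r > 0"
      using r x by auto
    have "F r / r \<le> F 1 / 1"
      using r x by (intro CD_function_ratio_mono[OF F]) auto
    then have "F r \<le> F 1 * r"
      using r0 by (simp add: pos_divide_le_eq)
    then have "1 / (F 1 * r) \<le> 1 / F r"
      using CD_function_pos[OF F r0] by (intro divide_left_mono) (use F1 r0 in auto)
    then show ?thesis
      by (simp add: field_simps)
  qed
  then have "- ln x / F 1 \<le> integral {x..1} (\<lambda>r. 1 / F r)"
    using ln_integral x
    by (intro has_integral_le[OF ln_integral integrable_integral])
       (auto intro!: integrable_continuous_interval
         continuous_on_subset[OF CD_function_continuous_on_inverse[OF F]])
  also have "\<dots> \<le> CD_tail F x"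
    using CD_tail_split[OF F, of x 1] CD_tail_nonneg[OF F, of 1] x by simp
  finally show ?thesis .
qed

lemma CD_tail_at_right_0:
  assumes F: "CD_function F"
  shows "filterlim (CD_tail F) at_top (at_right 0)"
proof (rule filterlim_at_top_mono)
  show "filterlim (\<lambda>x. - ln x / F 1) at_top (at_right 0)"
  proof -
    have "filterlim (\<lambda>x. inverse (F 1) * - ln x) at_top (at_right (0::real))"
      using CD_function_pos[OF F, of 1]
      by (intro filterlim_tendsto_pos_mult_at_top[OF tendsto_const]
          filterlim_compose[OF filterlim_uminus_at_top_at_bot ln_at_0]) auto
    then show ?thesis
      by (simp add: divide_inverse mult.commute)
  qed
  show "\<forall>\<^sub>F x in at_right 0. - ln x / F 1 \<le> CD_tail F x"
    using eventually_at_right_real[OF zero_less_one]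
    by eventually_elim (intro CD_tail_ge_ln[OF F], auto)
qed

lemma CD_tail_at_top:
  assumes F: "CD_function F"
  shows "(CD_tail F \<longlongrightarrow> 0) at_top"
proof -
  let ?f = "\<lambda>r. 1 / F r"
  have int1: "?f absolutely_integrable_on {1..}"
    using CD_function_absolutely_integrable_inverse[OF F] by simp
  have "((\<lambda>b. LINT r:{1..b}|lebesgue. ?f r) \<longlongrightarrow> (LINT r:{1..}|lebesgue. ?f r)) at_top"
    by (rule tendsto_set_lebesgue_integral_at_top) (use int1 in auto)
  moreover have "\<forall>\<^sub>F b in at_top. (LINT r:{1..b}|lebesgue. ?f r) = integral {1..b} ?f"
    using eventually_ge_at_top[of "1::real"]
  proof eventually_elim
    case (elim b)
    have "set_integrable lebesgue {1..b} ?f"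
      by (rule set_integrable_subset[OF int1]) auto
    then show ?case
      by (rule set_lebesgue_integral_eq_integral(2))
  qed
  ultimately have "((\<lambda>b. integral {1..b} ?f) \<longlongrightarrow> CD_tail F 1) at_top"
    using tendsto_cong set_lebesgue_integral_eq_integral(2)[OF int1]
    by (fastforce simp: CD_tail_def)
  then have "((\<lambda>b. CD_tail F 1 - integral {1..b} ?f) \<longlongrightarrow> 0) at_top"
    by (auto intro: tendsto_eq_intros)
  moreover have "\<forall>\<^sub>F b in at_top. CD_tail F 1 - integral {1..b} ?f = CD_tail F b"
    using eventually_ge_at_top[of "1::real"]
    by eventually_elim (use CD_tail_split[OF F, of 1] in simp)
  ultimately show ?thesis
    by (rule Lim_transform_eventually)
qed

lemma CD_tail_less_iff:
  assumes F: "CD_function F" and "0 < x" "0 < y"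
  shows "CD_tail F x < CD_tail F y \<longleftrightarrow> y < x"
  using monotone_onD[OF CD_tail_strict_antimono[OF F], of x y]
    monotone_onD[OF CD_tail_strict_antimono[OF F], of y x] assms
  by (cases x y rule: linorder_cases) auto

lemma CD_tail_inj_on:
  assumes F: "CD_function F"
  shows "inj_on (CD_tail F) {0<..}"
proof (rule inj_onI)
  fix x y :: real
  assume "x \<in> {0<..}" "y \<in> {0<..}" "CD_tail F x = CD_tail F y"
  then show "x = y"
    using CD_tail_less_iff[OF F, of x y] CD_tail_less_iff[OF F, of y x] by auto
qed

lemma CD_tail_image:
  assumes F: "CD_function F"
  shows "CD_tail F ` {0<..} = {0<..}"
proof (intro equalityI subsetI)
  show "y \<in> {0<..}" if "y \<in> CD_tail F ` {0<..}" for y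
    using that CD_tail_pos[OF F] by auto
  fix t :: real
  assume "t \<in> {0<..}"
  then have t: "t > 0"
    by simp
  have "\<forall>\<^sub>F x in at_right 0. t \<le> CD_tail F x"
    using CD_tail_at_right_0[OF F] by (simp add: filterlim_at_top)
  then obtain c where "c > 0" "\<And>y. 0 < y \<Longrightarrow> y < c \<Longrightarrow> t \<le> CD_tail F y"
    by (auto simp: eventually_at_right_field)
  then have a: "c/2 > 0" "t \<le> CD_tail F (c/2)"
    by auto
  have "\<forall>\<^sub>F x in at_top. CD_tail F x < t"
    using order_tendstoD(2)[OF CD_tail_at_top[OF F] t] .
  then obtain N where N: "\<And>x. x \<ge> N \<Longrightarrow> CD_tail F x < t"
    by (auto simp: eventually_at_top_linorder)
  define b where "b = max N (c/2)"
  have b: "c/2 \<le> b" "CD_tail F b < t"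
    using N by (auto simp: b_def)
  have "continuous_on {c/2..b} (CD_tail F)"
    using a by (intro continuous_on_subset[OF CD_tail_continuous_on[OF F]]) auto
  then obtain x where "c/2 \<le> x" "CD_tail F x = t"
    using IVT2'[of "CD_tail F" b t "c/2"] a b by auto
  with a show "t \<in> CD_tail F ` {0<..}"
    by force
qed

lemma CD_tail_right_inverse_limits:
  assumes F: "CD_function F" and \<psi>: "\<And>t. t > 0 \<Longrightarrow> \<psi> t > 0 \<and> CD_tail F (\<psi> t) = t"
  shows "filterlim \<psi> at_top (at_right 0)" and "(\<psi> \<longlongrightarrow> 0) at_top"
proof -
  show "filterlim \<psi> at_top (at_right 0)"
    unfolding filterlim_at_top
  proof
    fix Z :: real
    have M: "max Z 1 > 0"
      by simp
    show "\<forall>\<^sub>F t in at_right 0. Z \<le> \<psi> t"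
      using eventually_at_right_real[OF CD_tail_pos[OF F M]]
    proof eventually_elim
      case (elim t)
      then have "\<not> CD_tail F (max Z 1) < CD_tail F (\<psi> t)"
        using \<psi>[of t] by auto
      then show ?case
        using CD_tail_less_iff[OF F M, of "\<psi> t"] \<psi>[of t] elim by auto
    qed
  qed
  show "(\<psi> \<longlongrightarrow> 0) at_top"
  proof (rule order_tendstoI)
    show "\<forall>\<^sub>F t in at_top. a < \<psi> t" if "a < 0" for a
      using eventually_gt_at_top[of 0] by eventually_elim (use \<psi> that in force)
    show "\<forall>\<^sub>F t in at_top. \<psi> t < a" if a: "0 < a" for a
      using eventually_gt_at_top[of "max 0 (CD_tail F a)"]
    proof eventually_elim
      case (elim t)
      then have "CD_tail F a < CD_tail F (\<psi> t)"
        using \<psi>[of t] by auto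
      then show ?case
        using CD_tail_less_iff[OF F a, of "\<psi> t"] \<psi>[of t] elim by auto
    qed
  qed
qed

lemma CD_solution_tail:
  assumes F: "CD_function F" and \<psi>: "CD_solution F \<psi>" and t: "t > 0"
  shows "CD_tail F (\<psi> t) = t"
proof -
  have pos: "\<And>s. s > 0 \<Longrightarrow> \<psi> s > 0"
    and deriv: "\<And>s. s > 0 \<Longrightarrow> (\<psi> has_real_derivative - F (\<psi> s)) (at s)"
    and blowup: "filterlim \<psi> at_top (at_right 0)"
    using \<psi> by (auto simp: CD_solution_def)
  have "((\<lambda>s. CD_tail F (\<psi> s) - s) has_real_derivative 0) (at s within {0<..})" if s: "s > 0" for s
  proof -
    have "((\<lambda>s. CD_tail F (\<psi> s)) has_real_derivative - (1 / F (\<psi> s)) * - F (\<psi> s)) (at s)"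
      by (rule DERIV_chain2[OF CD_tail_has_derivative[OF F pos[OF s]] deriv[OF s]])
    moreover have "- (1 / F (\<psi> s)) * - F (\<psi> s) = 1"
      using CD_function_pos[OF F pos[OF s]] by simp
    ultimately have "((\<lambda>s. CD_tail F (\<psi> s) - s) has_real_derivative 1 - 1) (at s)"
      by (intro derivative_intros) auto
    then show ?thesis
      by (simp add: has_field_derivative_at_within)
  qed
  then obtain c where c: "\<And>s. s \<in> {0<..} \<Longrightarrow> CD_tail F (\<psi> s) - s = c"
    using has_field_derivative_zero_constant[of "{0<..}" "\<lambda>s. CD_tail F (\<psi> s) - s"] by auto
  have lim0: "((\<lambda>s. CD_tail F (\<psi> s) - s) \<longlongrightarrow> 0 - 0) (at_right 0)"
    by (intro tendsto_diff filterlim_compose[OF CD_tail_at_top[OF F] blowup] tendsto_ident_at)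
  have limc: "((\<lambda>s. CD_tail F (\<psi> s) - s) \<longlongrightarrow> c) (at_right 0)"
    using eventually_at_right_real[OF zero_less_one]
    by (rule tendsto_eventually[OF eventually_mono]) (simp add: c)
  have "c = 0"
    using tendsto_unique[OF _ limc lim0] by simp
  then show ?thesis
    using c[of t] t by simp
qed

lemma CD_solution_unique:
  assumes F: "CD_function F" and "CD_solution F \<psi>" "CD_solution F \<phi>" "t > 0"
  shows "\<psi> t = \<phi> t"
  using CD_solution_tail[OF F] inj_onD[OF CD_tail_inj_on[OF F]] assms
  by (simp add: CD_solution_def)

lemma CD_solution_strict_antimono:
  assumes F: "CD_function F" and \<psi>: "CD_solution F \<psi>"
  shows "strict_antimono_on {0<..} \<psi>"
proof (rule monotone_onI)
  fix s t :: real
  assume s: "s \<in> {0<..}" and "s < t"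
  show "\<psi> t < \<psi> s"
  proof (rule DERIV_neg_imp_decreasing[OF \<open>s < t\<close>])
    fix r assume "s \<le> r"
    with s have "r > 0"
      by simp
    then show "\<exists>d. (\<psi> has_real_derivative d) (at r) \<and> d < 0"
      using \<psi> CD_function_pos[OF F] by (intro exI[of _ "- F (\<psi> r)"]) (simp add: CD_solution_def)
  qed
qed

lemma CD_solution_log_convex:
  assumes F: "CD_function F" and \<psi>: "CD_solution F \<psi>"
  shows "convex_on {0<..} (\<lambda>t. ln (\<psi> t))"
proof (rule convex_on_realI[where f' = "\<lambda>t. - (F (\<psi> t) / \<psi> t)"])
  have pos: "\<And>t. t > 0 \<Longrightarrow> \<psi> t > 0"
    using \<psi> by (simp add: CD_solution_def)
  show "((\<lambda>t. ln (\<psi> t)) has_real_derivative - (F (\<psi> t) / \<psi> t)) (at t)" if "t \<in> {0<..}" for t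
  proof -
    have "((\<lambda>t. ln (\<psi> t)) has_real_derivative inverse (\<psi> t) * - F (\<psi> t)) (at t)"
      using that pos \<psi> by (intro DERIV_chain2[OF DERIV_ln]) (auto simp: CD_solution_def)
    then show ?thesis
      by (simp add: field_simps)
  qed
  show "- (F (\<psi> s) / \<psi> s) \<le> - (F (\<psi> t) / \<psi> t)" if "s \<in> {0<..}" "t \<in> {0<..}" "s \<le> t" for s t
  proof -
    have "\<psi> t \<le> \<psi> s"
      using monotone_onD[OF CD_solution_strict_antimono[OF F \<psi>], of s t] that
      by (cases "s = t") auto
    then show ?thesis
      using CD_function_ratio_mono[OF F, of "\<psi> t" "\<psi> s"] pos that by simp
  qed
qed simp

lemma CD_solution_exists:
  assumes F: "CD_function F"
  shows "CD_solution F (inv_into {0<..} (CD_tail F))"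
proof -
  define \<phi> where "\<phi> = inv_into {0<..} (CD_tail F)"
  have \<phi>: "\<phi> t > 0 \<and> CD_tail F (\<phi> t) = t" if "t > 0" for t
    using that inv_into_into[of t "CD_tail F" "{0<..}"] f_inv_into_f[of t "CD_tail F" "{0<..}"]
    by (simp add: CD_tail_image[OF F] \<phi>_def)
  have \<phi>_tail: "\<phi> (CD_tail F x) = x" if "x \<in> {0<..}" for x
    using inv_into_f_f[OF CD_tail_inj_on[OF F] that] by (simp add: \<phi>_def)
  have "(\<phi> has_real_derivative - F (\<phi> t)) (at t)" if t: "t > 0" for t
  proof -
    let ?x = "\<phi> t"
    have "(\<phi> has_derivative (*) (- F ?x)) (at (CD_tail F ?x))"
    proof (rule has_derivative_inverse_strong[of "{0<..}" ?x "CD_tail F" \<phi> "(*) (- (1 / F ?x))"])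
      show "(CD_tail F has_derivative (*) (- (1 / F ?x))) (at ?x)"
        using CD_tail_has_derivative[OF F] \<phi>[OF t] by (simp add: has_field_derivative_def)
      show "(*) (- (1 / F ?x)) \<circ> (*) (- F ?x) = id"
        using CD_function_pos[OF F, of ?x] \<phi>[OF t] by (auto simp: fun_eq_iff)
    qed (use \<phi>[OF t] \<phi>_tail CD_tail_continuous_on[OF F] in auto)
    then show ?thesis
      using \<phi>[OF t] by (simp add: has_field_derivative_def)
  qed
  then show ?thesis
    using \<phi> CD_tail_right_inverse_limits(1)[OF F, of \<phi>]
    by (simp add: CD_solution_def \<phi>_def)
qed

theorem lemma3p5:
  fixes F :: "real \<Rightarrow> real"
  assumes "CD_function F"
  shows "\<exists>\<phi>. CD_solution F \<phi> \<and>
           (\<forall>\<psi>. CD_solution F \<psi> \<longrightarrow> (\<forall>t>0. \<psi> t = \<phi> t)) \<and>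
           strict_antimono_on {0<..} \<phi> \<and>
           convex_on {0<..} (\<lambda>t. ln (\<phi> t)) \<and>
           (\<phi> \<longlongrightarrow> 0) at_top"
proof (intro exI conjI allI impI)
  let ?\<phi> = "inv_into {0<..} (CD_tail F)"
  have sol: "CD_solution F ?\<phi>"
    by (rule CD_solution_exists[OF assms])
  show "CD_solution F ?\<phi>"
    by (fact sol)
  show "\<psi> t = ?\<phi> t" if "CD_solution F \<psi>" and "t > 0" for \<psi> t
    using CD_solution_unique[OF assms that(1) sol that(2)] .
  show "strict_antimono_on {0<..} ?\<phi>"
    by (rule CD_solution_strict_antimono[OF assms sol])
  show "convex_on {0<..} (\<lambda>t. ln (?\<phi> t))"
    by (rule CD_solution_log_convex[OF assms sol])
  show "(?\<phi> \<longlongrightarrow> 0) at_top"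
    using CD_tail_right_inverse_limits(2)[OF assms] CD_solution_tail[OF assms sol] sol
    by (simp add: CD_solution_def)
qed

end
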